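(* In the reachability strategy-improvement algorithm described in the context, let $\gamma_i,\gamma_{i+1}$ be the player-1 selectors obtained at iterations $i$ and $i+1$, let $v_i=\mathrm{val}_1^{\overline{\gamma}_i}(\mathrm{Reach}(T))$, $v_{i+1}=\mathrm{val}_1^{\overline{\gamma}_{i+1}}(\mathrm{Reach}(T))$, and $I=\{s\in S:\mathrm{Pre}_1(v_i)(s)>v_i(s)\}$. Then $v_{i+1}(s)\ge\mathrm{Pre}_1(v_i)(s)$ for all $s\in S$; consequently $v_{i+1}(s)\ge v_i(s)$ for all $s\in S$ and $v_{i+1}(s)>v_i(s)$ for all $s\in I$.
   Context: Concurrent game structure $G=(S,M,\Gamma_1,\Gamma_2,\delta)$: finite states, finite moves, nonempty move sets $\Gamma_i(s)$, $\delta(s,a_1,a_2)\in\mathrm{Distr}(S)$ (simultaneous independent moves). Selectors assign to each state a distribution on available moves; $\overline{\xi}$ is the memoryless strategy playing $\xi$ forever; $\Pr_s^{\pi_1,\pi_2}$ is the induced measure on plays; $\mathrm{Reach}(X)$: plays visiting $X$. $\mathrm{val}_1^{\pi_1}(\mathrm{Reach}(T))(s)=\inf_{\pi_2}\Pr_s^{\pi_1,\pi_2}(\mathrm{Reach}(T))$, $\mathrm{val}_1(\mathrm{Reach}(T))=\sup_{\pi_1}\mathrm{val}_1^{\pi_1}(\mathrm{Reach}(T))$. For a valuation $v:S\to[0,1]$: $\mathrm{Pre}_{\xi_1,\xi_2}(v)(s)=\sum_{a,b}\sum_tv(t)\delta(s,a,b)(t)\xi_1(s)(a)\xi_2(s)(b)$,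 $\mathrm{Pre}_{1:\xi_1}(v)(s)=\inf_{\xi_2}\mathrm{Pre}_{\xi_1,\xi_2}(v)(s)$, $\mathrm{Pre}_1(v)(s)=\sup_{\xi_1}\mathrm{Pre}_{1:\xi_1}(v)(s)$. Fix $T\subseteq S$, $W_2=\{s:\mathrm{val}_1(\mathrm{Reach}(T))(s)=0\}$; all states of $T\cup W_2$ are absorbing. The algorithm: $\gamma_0$ is the uniform selector on $\Gamma_1(s)$, $v_i=\mathrm{val}_1^{\overline{\gamma}_i}(\mathrm{Reach}(T))$. At iteration $i$: $I'=\{s\in S\setminus(T\cup W_2):\mathrm{Pre}_1(v_i)(s)>v_i(s)\}$; $\xi_1$ is a selector with $\mathrm{Pre}_{1:\xi_1}(v_i)(s)=\mathrm{Pre}_1(v_i)(s)$ for $s\in I'$; $\gamma_{i+1}(s)=\gamma_i(s)$ for $s\notin I'$ and $\gamma_{i+1}(s)=\xi_1(s)$ for $s\in I'$; stop when $I'=\emptyset$. *)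

theory Defs
  imports "HOL-Probability.Probability"
begin

(* A concurrent game structure G = (S, M, Gamma1, Gamma2, delta) is represented by
   a finite state type 's, a finite move type 'm, move-set functions
   Gamma1 Gamma2 :: 's => 'm set and transition function delta :: 's => 'm => 'm => 's pmf. *)

definition sel :: "('s \<Rightarrow> 'm set) \<Rightarrow> ('s \<Rightarrow> 'm pmf) set" where
  "sel Gam = {\<xi>. \<forall>s. set_pmf (\<xi> s) \<subseteq> Gam s}"

(* (history dependent, randomized) strategies: map nonempty finite state sequences
   (last element = current state) to distributions on available moves *)
definition strat :: "('s \<Rightarrow> 'm set) \<Rightarrow> ('s list \<Rightarrow> 'm pmf) set" where
  "strat Gam = {\<pi>. \<forall>h. set_pmf (\<pi> h) \<subseteq> Gam (last h)}"

definition mless :: "('s \<Rightarrow> 'm pmf) \<Rightarrow> ('s list \<Rightarrow> 'm pmf)" where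
  "mless \<xi> = (\<lambda>h. \<xi> (last h))"

(* probability, under strategies pi1 pi2 and after history h, that the play visits T
   within the next n steps (counting the current state) *)
fun reach_upto :: "('s::finite \<Rightarrow> 'm::finite \<Rightarrow> 'm \<Rightarrow> 's pmf) \<Rightarrow> 's set
      \<Rightarrow> ('s list \<Rightarrow> 'm pmf) \<Rightarrow> ('s list \<Rightarrow> 'm pmf) \<Rightarrow> nat \<Rightarrow> 's list \<Rightarrow> real" where
  "reach_upto \<delta> T \<pi>1 \<pi>2 0 h = (if last h \<in> T then 1 else 0)"
| "reach_upto \<delta> T \<pi>1 \<pi>2 (Suc n) h = (if last h \<in> T then 1 else
     (\<Sum>a\<in>UNIV. \<Sum>b\<in>UNIV. \<Sum>t\<in>UNIV. pmf (\<pi>1 h) a * pmf (\<pi>2 h) b * pmf (\<delta> (last h) a b) t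
        * reach_upto \<delta> T \<pi>1 \<pi>2 n (h @ [t])))"

(* Pr_s^{pi1,pi2}(Reach T): by continuity of measure, the limit (supremum) of the
   probabilities of visiting T within n steps *)
definition reach_prob :: "('s::finite \<Rightarrow> 'm::finite \<Rightarrow> 'm \<Rightarrow> 's pmf) \<Rightarrow> 's set
      \<Rightarrow> ('s list \<Rightarrow> 'm pmf) \<Rightarrow> ('s list \<Rightarrow> 'm pmf) \<Rightarrow> 's \<Rightarrow> real" where
  "reach_prob \<delta> T \<pi>1 \<pi>2 s = (SUP n. reach_upto \<delta> T \<pi>1 \<pi>2 n [s])"

definition val1_str :: "('s \<Rightarrow> 'm set) \<Rightarrow> ('s::finite \<Rightarrow> 'm::finite \<Rightarrow> 'm \<Rightarrow> 's pmf) \<Rightarrow> 's set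
      \<Rightarrow> ('s list \<Rightarrow> 'm pmf) \<Rightarrow> 's \<Rightarrow> real" where
  "val1_str Gam2 \<delta> T \<pi>1 s = (INF \<pi>2\<in>strat Gam2. reach_prob \<delta> T \<pi>1 \<pi>2 s)"

definition val1 :: "('s \<Rightarrow> 'm set) \<Rightarrow> ('s \<Rightarrow> 'm set) \<Rightarrow> ('s::finite \<Rightarrow> 'm::finite \<Rightarrow> 'm \<Rightarrow> 's pmf)
      \<Rightarrow> 's set \<Rightarrow> 's \<Rightarrow> real" where
  "val1 Gam1 Gam2 \<delta> T s = (SUP \<pi>1\<in>strat Gam1. val1_str Gam2 \<delta> T \<pi>1 s)"

definition W2 :: "('s \<Rightarrow> 'm set) \<Rightarrow> ('s \<Rightarrow> 'm set) \<Rightarrow> ('s::finite \<Rightarrow> 'm::finite \<Rightarrow> 'm \<Rightarrow> 's pmf)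
      \<Rightarrow> 's set \<Rightarrow> 's set" where
  "W2 Gam1 Gam2 \<delta> T = {s. val1 Gam1 Gam2 \<delta> T s = 0}"

definition Pre_pair :: "('s::finite \<Rightarrow> 'm::finite \<Rightarrow> 'm \<Rightarrow> 's pmf) \<Rightarrow> ('s \<Rightarrow> 'm pmf) \<Rightarrow> ('s \<Rightarrow> 'm pmf)
      \<Rightarrow> ('s \<Rightarrow> real) \<Rightarrow> 's \<Rightarrow> real" where
  "Pre_pair \<delta> \<xi>1 \<xi>2 v s = (\<Sum>a\<in>UNIV. \<Sum>b\<in>UNIV. \<Sum>t\<in>UNIV.
      v t * pmf (\<delta> s a b) t * pmf (\<xi>1 s) a * pmf (\<xi>2 s) b)"

definition Pre1_sel :: "('s \<Rightarrow> 'm set) \<Rightarrow> ('s::finite \<Rightarrow> 'm::finite \<Rightarrow> 'm \<Rightarrow> 's pmf) \<Rightarrow> ('s \<Rightarrow> 'm pmf)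
      \<Rightarrow> ('s \<Rightarrow> real) \<Rightarrow> 's \<Rightarrow> real" where
  "Pre1_sel Gam2 \<delta> \<xi>1 v s = (INF \<xi>2\<in>sel Gam2. Pre_pair \<delta> \<xi>1 \<xi>2 v s)"

definition Pre1 :: "('s \<Rightarrow> 'm set) \<Rightarrow> ('s \<Rightarrow> 'm set) \<Rightarrow> ('s::finite \<Rightarrow> 'm::finite \<Rightarrow> 'm \<Rightarrow> 's pmf)
      \<Rightarrow> ('s \<Rightarrow> real) \<Rightarrow> 's \<Rightarrow> real" where
  "Pre1 Gam1 Gam2 \<delta> v s = (SUP \<xi>1\<in>sel Gam1. Pre1_sel Gam2 \<delta> \<xi>1 v s)"

definition unif_sel :: "('s \<Rightarrow> 'm set) \<Rightarrow> ('s \<Rightarrow> 'm pmf)" where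
  "unif_sel Gam1 = (\<lambda>s. pmf_of_set (Gam1 s))"

definition vsel :: "('s \<Rightarrow> 'm set) \<Rightarrow> ('s::finite \<Rightarrow> 'm::finite \<Rightarrow> 'm \<Rightarrow> 's pmf) \<Rightarrow> 's set
      \<Rightarrow> ('s \<Rightarrow> 'm pmf) \<Rightarrow> 's \<Rightarrow> real" where
  "vsel Gam2 \<delta> T \<gamma> = val1_str Gam2 \<delta> T (mless \<gamma>)"

definition Iprime :: "('s \<Rightarrow> 'm set) \<Rightarrow> ('s \<Rightarrow> 'm set) \<Rightarrow> ('s::finite \<Rightarrow> 'm::finite \<Rightarrow> 'm \<Rightarrow> 's pmf)
      \<Rightarrow> 's set \<Rightarrow> ('s \<Rightarrow> 'm pmf) \<Rightarrow> 's set" where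
  "Iprime Gam1 Gam2 \<delta> T \<gamma> = {s. s \<notin> T \<union> W2 Gam1 Gam2 \<delta> T \<and>
      Pre1 Gam1 Gam2 \<delta> (vsel Gam2 \<delta> T \<gamma>) s > vsel Gam2 \<delta> T \<gamma> s}"

definition improve_step :: "('s \<Rightarrow> 'm set) \<Rightarrow> ('s \<Rightarrow> 'm set) \<Rightarrow> ('s::finite \<Rightarrow> 'm::finite \<Rightarrow> 'm \<Rightarrow> 's pmf)
      \<Rightarrow> 's set \<Rightarrow> ('s \<Rightarrow> 'm pmf) \<Rightarrow> ('s \<Rightarrow> 'm pmf) \<Rightarrow> bool" where
  "improve_step Gam1 Gam2 \<delta> T \<gamma> \<gamma>' \<longleftrightarrow>
     (let I' = Iprime Gam1 Gam2 \<delta> T \<gamma>; v = vsel Gam2 \<delta> T \<gamma> in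
      I' \<noteq> {} \<and>
      (\<exists>\<xi>1\<in>sel Gam1. (\<forall>s\<in>I'. Pre1_sel Gam2 \<delta> \<xi>1 v s = Pre1 Gam1 Gam2 \<delta> v s) \<and>
         \<gamma>' = (\<lambda>s. if s \<in> I' then \<xi>1 s else \<gamma> s)))"

inductive alg_iter :: "('s \<Rightarrow> 'm set) \<Rightarrow> ('s \<Rightarrow> 'm set) \<Rightarrow> ('s::finite \<Rightarrow> 'm::finite \<Rightarrow> 'm \<Rightarrow> 's pmf)
      \<Rightarrow> 's set \<Rightarrow> ('s \<Rightarrow> 'm pmf) \<Rightarrow> bool"
  for Gam1 Gam2 \<delta> T where
  init: "alg_iter Gam1 Gam2 \<delta> T (unif_sel Gam1)"
| step: "alg_iter Gam1 Gam2 \<delta> T \<gamma> \<Longrightarrow> improve_step Gam1 Gam2 \<delta> T \<gamma> \<gamma>'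
          \<Longrightarrow> alg_iter Gam1 Gam2 \<delta> T \<gamma>'"

end

theory Submission
  imports Defs
begin

text \<open>Let \<open>u = v\<^sub>i\<close> and let \<open>w \<le> v\<^sub>i\<^sub>+\<^sub>1\<close> be the value, obtained by value iteration, of the
one-player game in which player 2 best-responds to the memoryless strategy \<open>\<gamma>\<^sub>i\<^sub>+\<^sub>1\<close>; it is a
fixpoint of \<open>v \<mapsto> min\<^sub>b Pre_move \<gamma>\<^sub>i\<^sub>+\<^sub>1 b v\<close>. The main step is \<open>u \<le> w\<close>. Otherwise let \<open>Z\<close> be the
set where \<open>u - w\<close> attains its positive maximum. On \<open>Z\<close> the selector cannot have been switched,
because a switch strictly increases the one-step expectation of \<open>u\<close>; hence
\<open>u \<le> Pre_move \<gamma>\<^sub>i b u\<close> there, and comparing with the fixpoint equation of \<open>w\<close> shows that the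
minimising moves of player 2 keep the play inside \<open>Z\<close>, which avoids \<open>T\<close>. So \<open>u = 0\<close> on \<open>Z\<close>,
contradicting \<open>u > w \<ge> 0\<close>. Finally \<open>Pre\<^sub>1(u) \<le> w\<close>: at switched states because \<open>\<gamma>\<^sub>i\<^sub>+\<^sub>1\<close> realises
\<open>Pre\<^sub>1(u)\<close> there and \<open>u \<le> w\<close>, elsewhere because \<open>Pre\<^sub>1(u) \<le> u\<close>.\<close>

subsection \<open>One-step expectation against a fixed move\<close>

definition Pre_move :: "('s::finite \<Rightarrow> 'm::finite \<Rightarrow> 'm \<Rightarrow> 's pmf) \<Rightarrow> ('s \<Rightarrow> 'm pmf) \<Rightarrow> 'm
      \<Rightarrow> ('s \<Rightarrow> real) \<Rightarrow> 's \<Rightarrow> real" where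
  "Pre_move \<delta> \<xi> b v s = (\<Sum>a\<in>UNIV. \<Sum>t\<in>UNIV. v t * pmf (\<delta> s a b) t * pmf (\<xi> s) a)"

lemma sum_pmf_UNIV: "(\<Sum>x\<in>(UNIV::'a::finite set). pmf p x) = 1"
  by (rule sum_pmf_eq_1) auto

lemma Pre_move_mono: "(\<And>t. v t \<le> v' t) \<Longrightarrow> Pre_move \<delta> \<xi> b v s \<le> Pre_move \<delta> \<xi> b v' s"
  unfolding Pre_move_def by (intro sum_mono mult_right_mono) auto

lemma Pre_move_const: "Pre_move \<delta> \<xi> b (\<lambda>_. c) s = c"
proof -
  have "Pre_move \<delta> \<xi> b (\<lambda>_. c) s = (\<Sum>a\<in>UNIV. c * pmf (\<xi> s) a * (\<Sum>t\<in>UNIV. pmf (\<delta> s a b) t))"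
    unfolding Pre_move_def by (simp add: sum_distrib_left sum_distrib_right mult_ac)
  also have "\<dots> = c" by (simp add: sum_pmf_UNIV flip: sum_distrib_left)
  finally show ?thesis .
qed

lemma Pre_move_diff:
  "Pre_move \<delta> \<xi> b (\<lambda>t. v t - v' t) s = Pre_move \<delta> \<xi> b v s - Pre_move \<delta> \<xi> b v' s"
  unfolding Pre_move_def by (simp add: sum_subtractf left_diff_distrib)

lemma Pre_move_add_const: "Pre_move \<delta> \<xi> b (\<lambda>t. v t + c) s = Pre_move \<delta> \<xi> b v s + c"
  using Pre_move_diff[of \<delta> \<xi> b "\<lambda>t. v t + c" "\<lambda>_. c" s] Pre_move_const[of \<delta> \<xi> b c s] by simp

lemma Pre_move_le_bound: "(\<And>t. v t \<le> M) \<Longrightarrow> Pre_move \<delta> \<xi> b v s \<le> M"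
  using Pre_move_mono[of v "\<lambda>_. M"] Pre_move_const by metis

lemma Pre_move_ge_bound: "(\<And>t. M \<le> v t) \<Longrightarrow> M \<le> Pre_move \<delta> \<xi> b v s"
  using Pre_move_mono[of "\<lambda>_. M" v] Pre_move_const by metis

lemma Pre_move_cong_sel: "\<xi> s = \<xi>' s \<Longrightarrow> Pre_move \<delta> \<xi> b v s = Pre_move \<delta> \<xi>' b v s"
  unfolding Pre_move_def by simp

lemma Pre_move_nonpos_imp_zero_on_support:
  assumes nonneg: "\<And>t. 0 \<le> v t" and le: "Pre_move \<delta> \<xi> b v s \<le> 0"
    and a: "a \<in> set_pmf (\<xi> s)" and t: "t \<in> set_pmf (\<delta> s a b)"
  shows "v t = 0"
proof -
  have terms_nonneg: "\<And>a t. 0 \<le> v t * pmf (\<delta> s a b) t * pmf (\<xi> s) a"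
    using nonneg by (intro mult_nonneg_nonneg pmf_nonneg) auto
  have inner_nonneg: "\<And>a. 0 \<le> (\<Sum>t\<in>UNIV. v t * pmf (\<delta> s a b) t * pmf (\<xi> s) a)"
    using terms_nonneg by (intro sum_nonneg) auto
  have "Pre_move \<delta> \<xi> b v s = 0"
    using le inner_nonneg unfolding Pre_move_def by (meson antisym sum_nonneg)
  then have "(\<Sum>t\<in>UNIV. v t * pmf (\<delta> s a b) t * pmf (\<xi> s) a) = 0"
    unfolding Pre_move_def using inner_nonneg by (subst (asm) sum_nonneg_eq_0_iff) auto
  then have "v t * pmf (\<delta> s a b) t * pmf (\<xi> s) a = 0"
    using terms_nonneg by (subst (asm) sum_nonneg_eq_0_iff) auto
  moreover have "pmf (\<delta> s a b) t \<noteq> 0" "pmf (\<xi> s) a \<noteq> 0"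
    using a t by (auto simp: set_pmf_iff)
  ultimately show ?thesis by simp
qed

lemma Pre_move_absorbing:
  assumes "\<And>a. a \<in> set_pmf (\<xi> s) \<Longrightarrow> \<delta> s a b = return_pmf s"
  shows "Pre_move \<delta> \<xi> b v s = v s"
proof -
  have "(\<Sum>t\<in>UNIV. v t * pmf (\<delta> s a b) t * pmf (\<xi> s) a) = v s * pmf (\<xi> s) a" for a
  proof (cases "a \<in> set_pmf (\<xi> s)")
    case True
    have "(\<Sum>t\<in>UNIV. v t * pmf (\<delta> s a b) t * pmf (\<xi> s) a) =
        (\<Sum>t\<in>UNIV. if t = s then v s * pmf (\<xi> s) a else 0)"
      using assms[OF True] by (intro sum.cong refl) (auto simp: indicator_def)
    then show ?thesis by simp
  qed (simp add: set_pmf_iff)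
  then have "Pre_move \<delta> \<xi> b v s = (\<Sum>a\<in>UNIV. v s * pmf (\<xi> s) a)"
    unfolding Pre_move_def by simp
  also have "\<dots> = v s" by (simp add: sum_distrib_left[symmetric] sum_pmf_UNIV)
  finally show ?thesis .
qed

lemma Pre_pair_eq_sum_Pre_move:
  "Pre_pair \<delta> \<xi>1 \<xi>2 v s = (\<Sum>b\<in>UNIV. pmf (\<xi>2 s) b * Pre_move \<delta> \<xi>1 b v s)"
proof -
  have "(\<Sum>b\<in>UNIV. pmf (\<xi>2 s) b * Pre_move \<delta> \<xi>1 b v s) =
      (\<Sum>b\<in>UNIV. \<Sum>a\<in>UNIV. \<Sum>t\<in>UNIV. v t * pmf (\<delta> s a b) t * pmf (\<xi>1 s) a * pmf (\<xi>2 s) b)"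
    unfolding Pre_move_def by (simp add: sum_distrib_left sum_distrib_right mult_ac)
  also have "\<dots> = Pre_pair \<delta> \<xi>1 \<xi>2 v s"
    unfolding Pre_pair_def by (rule sum.swap)
  finally show ?thesis ..
qed

lemma Pre_pair_nonneg: "(\<And>t. 0 \<le> v t) \<Longrightarrow> 0 \<le> Pre_pair \<delta> \<xi>1 \<xi>2 v s"
  unfolding Pre_pair_eq_sum_Pre_move
  by (intro sum_nonneg mult_nonneg_nonneg pmf_nonneg Pre_move_ge_bound) auto

lemma pmf_of_set_in_sel: "(\<And>s. Gam s \<noteq> {}) \<Longrightarrow> (\<lambda>s. pmf_of_set (Gam s)) \<in> sel (Gam :: _ \<Rightarrow> 'm::finite set)"
  unfolding sel_def by (auto simp: set_pmf_of_set)

lemma sel_update_return_pmf: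
  assumes "\<And>s. Gam s \<noteq> {}" and "b \<in> Gam s"
  shows "(\<lambda>s'. if s' = s then return_pmf b else pmf_of_set (Gam s')) \<in> sel (Gam :: _ \<Rightarrow> 'm::finite set)"
  unfolding sel_def using assms by (auto simp: set_pmf_of_set)

lemma Pre1_sel_le_Pre_pair:
  assumes "\<xi>2 \<in> sel Gam2" and "\<And>t. 0 \<le> v t"
  shows "Pre1_sel Gam2 \<delta> \<xi>1 v s \<le> Pre_pair \<delta> \<xi>1 \<xi>2 v s"
proof -
  have "bdd_below ((\<lambda>\<xi>2. Pre_pair \<delta> \<xi>1 \<xi>2 v s) ` sel Gam2)"
    by (rule bdd_belowI2[where m=0]) (rule Pre_pair_nonneg[OF assms(2)])
  then show ?thesis unfolding Pre1_sel_def by (rule cINF_lower[OF _ assms(1)])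
qed

subsection \<open>Reachability probabilities\<close>

lemma reach_upto_bounds: "0 \<le> reach_upto \<delta> T \<pi>1 \<pi>2 n h \<and> reach_upto \<delta> T \<pi>1 \<pi>2 n h \<le> 1"
proof (induction n arbitrary: h)
  case (Suc n)
  let ?p = "\<lambda>a b t. pmf (\<pi>1 h) a * pmf (\<pi>2 h) b * pmf (\<delta> (last h) a b) t"
  let ?S = "\<Sum>a\<in>UNIV. \<Sum>b\<in>UNIV. \<Sum>t\<in>UNIV. ?p a b t * reach_upto \<delta> T \<pi>1 \<pi>2 n (h @ [t])"
  have p_nonneg: "0 \<le> ?p a b t" for a b t by (intro mult_nonneg_nonneg pmf_nonneg)
  have "?S \<le> (\<Sum>a\<in>UNIV. \<Sum>b\<in>UNIV. \<Sum>t\<in>UNIV. ?p a b t)"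
    using Suc.IH p_nonneg by (intro sum_mono mult_left_le) auto
  also have "\<dots> = 1"
    by (simp add: sum_pmf_UNIV flip: sum_distrib_left)
  finally have "?S \<le> 1" .
  moreover have "0 \<le> ?S"
    using Suc.IH p_nonneg by (intro sum_nonneg mult_nonneg_nonneg) auto
  ultimately show ?case by simp
qed simp

lemma reach_upto_cong_suffix:
  "(\<And>h'. \<pi>1 (h @ h') = \<pi>1' (h @ h')) \<Longrightarrow> (\<And>h'. \<pi>2 (h @ h') = \<pi>2' (h @ h')) \<Longrightarrow>
   reach_upto \<delta> T \<pi>1 \<pi>2 n h = reach_upto \<delta> T \<pi>1' \<pi>2' n h"
proof (induction n arbitrary: h)
  case (Suc n)
  have "\<pi>1 h = \<pi>1' h" "\<pi>2 h = \<pi>2' h" using Suc.prems[of "[]"] by auto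
  moreover have "reach_upto \<delta> T \<pi>1 \<pi>2 n (h @ [t]) = reach_upto \<delta> T \<pi>1' \<pi>2' n (h @ [t])" for t
    by (rule Suc.IH) (use Suc.prems[of "t # _"] in auto)
  ultimately show ?case by simp
qed simp

lemma reach_upto_Cons:
  "h \<noteq> [] \<Longrightarrow> reach_upto \<delta> T \<pi>1 \<pi>2 n (x # h) =
     reach_upto \<delta> T (\<lambda>h. \<pi>1 (x # h)) (\<lambda>h. \<pi>2 (x # h)) n h"
proof (induction n arbitrary: h)
  case (Suc n)
  have "reach_upto \<delta> T \<pi>1 \<pi>2 n (x # (h @ [t])) =
      reach_upto \<delta> T (\<lambda>h. \<pi>1 (x # h)) (\<lambda>h. \<pi>2 (x # h)) n (h @ [t])" for t
    by (rule Suc.IH) simp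
  then show ?case using Suc.prems by simp
qed simp

lemma bdd_above_reach_upto: "bdd_above (range (\<lambda>n. reach_upto \<delta> T \<pi>1 \<pi>2 n h))"
  by (rule bdd_aboveI2[where M=1]) (simp add: reach_upto_bounds)

lemma reach_upto_le_reach_prob: "reach_upto \<delta> T \<pi>1 \<pi>2 n [s] \<le> reach_prob \<delta> T \<pi>1 \<pi>2 s"
  unfolding reach_prob_def by (rule cSUP_upper[OF _ bdd_above_reach_upto]) simp

lemma reach_prob_bounds: "0 \<le> reach_prob \<delta> T \<pi>1 \<pi>2 s \<and> reach_prob \<delta> T \<pi>1 \<pi>2 s \<le> 1"
proof
  show "0 \<le> reach_prob \<delta> T \<pi>1 \<pi>2 s"
    using reach_upto_bounds reach_upto_le_reach_prob order_trans by blast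
  show "reach_prob \<delta> T \<pi>1 \<pi>2 s \<le> 1"
    unfolding reach_prob_def by (rule cSUP_least) (simp_all add: reach_upto_bounds)
qed

lemma pmf_of_set_in_strat:
  "(\<And>s. Gam s \<noteq> {}) \<Longrightarrow> (\<lambda>h. pmf_of_set (Gam (last h))) \<in> strat (Gam :: _ \<Rightarrow> 'm::finite set)"
  unfolding strat_def by (simp add: set_pmf_of_set)

lemma bdd_below_reach_prob: "bdd_below ((\<lambda>\<pi>2. reach_prob \<delta> T \<pi>1 \<pi>2 s) ` A)"
  by (rule bdd_belowI2[where m=0]) (simp add: reach_prob_bounds)

lemma val1_str_le_reach_prob:
  "\<pi>2 \<in> strat Gam2 \<Longrightarrow> val1_str Gam2 \<delta> T \<pi>1 s \<le> reach_prob \<delta> T \<pi>1 \<pi>2 s"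
  unfolding val1_str_def by (rule cINF_lower[OF bdd_below_reach_prob])

lemma sum_return_pmf_weighted:
  fixes f :: "'b::finite \<Rightarrow> 'c::finite \<Rightarrow> real"
  shows "(\<Sum>b'\<in>UNIV. \<Sum>t\<in>UNIV. pmf (return_pmf b) b' * f b' t) = (\<Sum>t\<in>UNIV. f b t)"
proof -
  have "(\<Sum>b'\<in>UNIV. \<Sum>t\<in>UNIV. pmf (return_pmf b) b' * f b' t)
      = (\<Sum>b'\<in>UNIV. if b' = b then (\<Sum>t\<in>UNIV. f b' t) else 0)"
    by (rule sum.cong) (auto simp: indicator_def)
  then show ?thesis by simp
qed

lemma reach_upto_Suc_return_pmf:
  assumes "last h \<notin> T" and "\<pi>2 h = return_pmf b"
  shows "reach_upto \<delta> T \<pi>1 \<pi>2 (Suc n) h = (\<Sum>a\<in>UNIV. \<Sum>t\<in>UNIV.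
      pmf (\<pi>1 h) a * pmf (\<delta> (last h) a b) t * reach_upto \<delta> T \<pi>1 \<pi>2 n (h @ [t]))"
proof -
  have "reach_upto \<delta> T \<pi>1 \<pi>2 (Suc n) h = (\<Sum>a\<in>UNIV. \<Sum>b'\<in>UNIV. \<Sum>t\<in>UNIV. pmf (return_pmf b) b' *
      (pmf (\<pi>1 h) a * pmf (\<delta> (last h) a b') t * reach_upto \<delta> T \<pi>1 \<pi>2 n (h @ [t])))"
    using assms by (simp add: mult_ac)
  also have "\<dots> = (\<Sum>a\<in>UNIV. \<Sum>t\<in>UNIV.
      pmf (\<pi>1 h) a * pmf (\<delta> (last h) a b) t * reach_upto \<delta> T \<pi>1 \<pi>2 n (h @ [t]))"
    by (simp only: sum_return_pmf_weighted)
  finally show ?thesis .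
qed

lemma reach_upto_mless_le_Pre_move:
  assumes notT: "s \<notin> T" and first: "\<pi>2 [s] = return_pmf b" and nonneg: "\<And>t. 0 \<le> f t"
    and after: "\<And>m t. reach_upto \<delta> T (mless \<xi>) \<pi>2 m [s, t] \<le> f t"
  shows "reach_upto \<delta> T (mless \<xi>) \<pi>2 n [s] \<le> Pre_move \<delta> \<xi> b f s"
proof (cases n)
  case 0
  have "0 \<le> Pre_move \<delta> \<xi> b f s" by (rule Pre_move_ge_bound) (rule nonneg)
  then show ?thesis using 0 notT by simp
next
  case (Suc m)
  have "reach_upto \<delta> T (mless \<xi>) \<pi>2 n [s] = (\<Sum>a\<in>UNIV. \<Sum>t\<in>UNIV.
      pmf (\<xi> s) a * pmf (\<delta> s a b) t * reach_upto \<delta> T (mless \<xi>) \<pi>2 m [s, t])"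
    using reach_upto_Suc_return_pmf[of "[s]" T \<pi>2 b \<delta> "mless \<xi>" m] notT first Suc
    by (simp add: mless_def)
  also have "\<dots> \<le> (\<Sum>a\<in>UNIV. \<Sum>t\<in>UNIV. pmf (\<xi> s) a * pmf (\<delta> s a b) t * f t)"
    by (intro sum_mono mult_left_mono[OF after] mult_nonneg_nonneg pmf_nonneg)
  also have "\<dots> = Pre_move \<delta> \<xi> b f s"
    unfolding Pre_move_def by (simp only: mult.commute mult.left_commute)
  finally show ?thesis .
qed

lemma reach_upto_mless_trap_eq_0:
  assumes notT: "\<And>s. s \<in> Z \<Longrightarrow> s \<notin> T"
    and closed: "\<And>s a t. s \<in> Z \<Longrightarrow> a \<in> set_pmf (\<xi> s) \<Longrightarrow> t \<in> set_pmf (\<delta> s a (B s)) \<Longrightarrow> t \<in> Z"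
    and "last h \<in> Z"
  shows "reach_upto \<delta> T (mless \<xi>) (mless (\<lambda>s. return_pmf (B s))) n h = 0"
  using assms(3)
proof (induction n arbitrary: h)
  case (Suc n)
  let ?s = "last h" and ?\<pi>2 = "mless (\<lambda>s. return_pmf (B s))"
  have "pmf (mless \<xi> h) a * pmf (?\<pi>2 h) b * pmf (\<delta> ?s a b) t
      * reach_upto \<delta> T (mless \<xi>) ?\<pi>2 n (h @ [t]) = 0" for a b t
  proof (cases "a \<in> set_pmf (\<xi> ?s) \<and> b = B ?s \<and> t \<in> set_pmf (\<delta> ?s a b)")
    case True
    then have "t \<in> Z" using closed[OF Suc.prems] by blast
    then show ?thesis using Suc.IH[of "h @ [t]"] by simp
  qed (auto simp: mless_def set_pmf_iff indicator_def)
  then have "(\<Sum>a\<in>UNIV. \<Sum>b\<in>UNIV. \<Sum>t\<in>UNIV. pmf (mless \<xi> h) a * pmf (?\<pi>2 h) b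
      * pmf (\<delta> ?s a b) t * reach_upto \<delta> T (mless \<xi>) ?\<pi>2 n (h @ [t])) = 0"
    by (simp only: sum.neutral_const)
  then show ?case using notT[OF Suc.prems] by simp
qed (use notT in simp)

subsection \<open>Value iteration against a memoryless strategy\<close>

fun reach_val_iter :: "('s::finite \<Rightarrow> 'm::finite \<Rightarrow> 'm \<Rightarrow> 's pmf) \<Rightarrow> 's set \<Rightarrow> ('s \<Rightarrow> 'm set)
      \<Rightarrow> ('s \<Rightarrow> 'm pmf) \<Rightarrow> nat \<Rightarrow> 's \<Rightarrow> real" where
  "reach_val_iter \<delta> T Gam2 \<xi> 0 s = (if s \<in> T then 1 else 0)"
| "reach_val_iter \<delta> T Gam2 \<xi> (Suc n) s = (if s \<in> T then 1
     else Min ((\<lambda>b. Pre_move \<delta> \<xi> b (reach_val_iter \<delta> T Gam2 \<xi> n) s) ` Gam2 s))"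

definition reach_val_lim :: "('s::finite \<Rightarrow> 'm::finite \<Rightarrow> 'm \<Rightarrow> 's pmf) \<Rightarrow> 's set \<Rightarrow> ('s \<Rightarrow> 'm set)
      \<Rightarrow> ('s \<Rightarrow> 'm pmf) \<Rightarrow> 's \<Rightarrow> real" where
  "reach_val_lim \<delta> T Gam2 \<xi> s = (SUP n. reach_val_iter \<delta> T Gam2 \<xi> n s)"

lemma Min_image_le: "b \<in> (B :: 'a::finite set) \<Longrightarrow> Min (f ` B) \<le> (f b :: 'b::linorder)"
  by (rule Min_le) auto

lemma le_Min_image:
  "B \<noteq> {} \<Longrightarrow> (\<And>b. b \<in> (B :: 'a::finite set) \<Longrightarrow> x \<le> f b) \<Longrightarrow> (x :: 'b::linorder) \<le> Min (f ` B)"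
  by (subst Min_ge_iff) auto

lemma tendsto_Min_image:
  assumes "finite B" "B \<noteq> {}" "\<And>b. b \<in> B \<Longrightarrow> (\<lambda>n. f n b) \<longlonglongrightarrow> F b"
  shows "(\<lambda>n. Min ((\<lambda>b. f n b) ` B)) \<longlonglongrightarrow> (Min (F ` B) :: real)"
  using assms
proof (induction B rule: finite_ne_induct)
  case (insert x B)
  have "(\<lambda>n. min (f n x) (Min ((\<lambda>b. f n b) ` B))) \<longlonglongrightarrow> min (F x) (Min (F ` B))"
    by (intro tendsto_min insert.IH insert.prems) auto
  then show ?case using insert.hyps by (simp add: Min.insert)
qed simp

locale player2_moves =
  fixes Gam2 :: "'s::finite \<Rightarrow> 'm::finite set"
  assumes Gam2_nonempty: "Gam2 s \<noteq> {}"
begin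

lemma Pre1_sel_le_Pre_move:
  assumes "b \<in> Gam2 s" and "\<And>t. 0 \<le> v t"
  shows "Pre1_sel Gam2 \<delta> \<xi>1 v s \<le> Pre_move \<delta> \<xi>1 b v s"
proof -
  let ?\<xi>2 = "\<lambda>s'. if s' = s then return_pmf b else pmf_of_set (Gam2 s')"
  have "?\<xi>2 \<in> sel Gam2" by (rule sel_update_return_pmf) (rule Gam2_nonempty, rule assms(1))
  then have "Pre1_sel Gam2 \<delta> \<xi>1 v s \<le> Pre_pair \<delta> \<xi>1 ?\<xi>2 v s"
    by (rule Pre1_sel_le_Pre_pair) (rule assms(2))
  also have "\<dots> = Pre_move \<delta> \<xi>1 b v s"
    by (simp add: Pre_pair_eq_sum_Pre_move indicator_def)
  finally show ?thesis .
qed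

lemma Pre1_le_at_absorbing:
  assumes ne1: "\<And>s. Gam1 s \<noteq> {}" and nonneg: "\<And>t. 0 \<le> v t"
    and absorbing: "\<And>a b. a \<in> Gam1 s \<Longrightarrow> b \<in> Gam2 s \<Longrightarrow> \<delta> s a b = return_pmf s"
  shows "Pre1 Gam1 Gam2 \<delta> v s \<le> v s"
  unfolding Pre1_def
proof (rule cSUP_least)
  show "sel Gam1 \<noteq> {}" using pmf_of_set_in_sel[of Gam1, OF ne1] by auto
next
  fix \<xi> assume \<xi>: "\<xi> \<in> sel Gam1"
  obtain b where b: "b \<in> Gam2 s" using Gam2_nonempty[of s] by auto
  have "Pre1_sel Gam2 \<delta> \<xi> v s \<le> Pre_move \<delta> \<xi> b v s"
    by (rule Pre1_sel_le_Pre_move) (rule b, rule nonneg)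
  also have "\<dots> = v s"
  proof (rule Pre_move_absorbing)
    fix a assume "a \<in> set_pmf (\<xi> s)"
    then have "a \<in> Gam1 s" using \<xi> unfolding sel_def by auto
    then show "\<delta> s a b = return_pmf s" by (rule absorbing[OF _ b])
  qed
  finally show "Pre1_sel Gam2 \<delta> \<xi> v s \<le> v s" .
qed

lemma strat_nonempty: "strat Gam2 \<noteq> {}"
  using pmf_of_set_in_strat[of Gam2, OF Gam2_nonempty] by auto

lemma val1_str_bounds: "0 \<le> val1_str Gam2 \<delta> T \<pi>1 s \<and> val1_str Gam2 \<delta> T \<pi>1 s \<le> 1"
proof
  show "0 \<le> val1_str Gam2 \<delta> T \<pi>1 s"
    unfolding val1_str_def by (rule cINF_greatest[OF strat_nonempty]) (simp add: reach_prob_bounds)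
  from strat_nonempty obtain \<pi>2 where "\<pi>2 \<in> strat Gam2" by auto
  then show "val1_str Gam2 \<delta> T \<pi>1 s \<le> 1"
    using val1_str_le_reach_prob reach_prob_bounds order_trans by metis
qed

lemma ex_strat_reach_prob_less_val1_str:
  assumes "e > 0"
  shows "\<exists>\<pi>2\<in>strat Gam2. reach_prob \<delta> T \<pi>1 \<pi>2 s < val1_str Gam2 \<delta> T \<pi>1 s + e"
proof -
  have "(INF \<pi>2\<in>strat Gam2. reach_prob \<delta> T \<pi>1 \<pi>2 s) < val1_str Gam2 \<delta> T \<pi>1 s + e"
    using assms unfolding val1_str_def by simp
  then show ?thesis using cINF_less_iff[OF strat_nonempty bdd_below_reach_prob] by simp
qed

lemma strat_first_move_then:
  assumes "b \<in> Gam2 s" and "\<And>t. P t \<in> strat Gam2"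
  shows "(\<lambda>h. if h = [s] then return_pmf b else if 2 \<le> length h then P (h ! 1) (tl h)
      else pmf_of_set (Gam2 (last h))) \<in> strat Gam2"
  unfolding strat_def
proof (intro CollectI allI)
  fix h
  have "set_pmf (P (h ! 1) (tl h)) \<subseteq> Gam2 (last h)" if "2 \<le> length h"
  proof -
    have "set_pmf (P (h ! 1) (tl h)) \<subseteq> Gam2 (last (tl h))"
      using assms(2)[of "h ! 1"] unfolding strat_def by blast
    moreover have "last (tl h) = last h" using that by (intro last_tl) (cases h, auto)
    ultimately show ?thesis by simp
  qed
  moreover have "set_pmf (pmf_of_set (Gam2 (last h))) \<subseteq> Gam2 (last h)"
    using Gam2_nonempty[of "last h"] by (simp add: set_pmf_of_set)
  ultimately show "set_pmf (if h = [s] then return_pmf b else if 2 \<le> length h then P (h ! 1) (tl h)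
      else pmf_of_set (Gam2 (last h))) \<subseteq> Gam2 (last h)"
    using assms(1) by auto
qed

text \<open>Player 2 may play \<open>b\<close> once and then an \<open>e\<close>-optimal strategy from the successor.\<close>

lemma val1_str_mless_le_Pre_move:
  assumes notT: "s \<notin> T" and b: "b \<in> Gam2 s"
  shows "val1_str Gam2 \<delta> T (mless \<xi>) s \<le> Pre_move \<delta> \<xi> b (val1_str Gam2 \<delta> T (mless \<xi>)) s"
proof -
  define u where "u = val1_str Gam2 \<delta> T (mless \<xi>)"
  have "u s \<le> Pre_move \<delta> \<xi> b u s + e" if e: "e > 0" for e
  proof -
    have "\<exists>\<pi>\<in>strat Gam2. reach_prob \<delta> T (mless \<xi>) \<pi> t < u t + e" for t
      unfolding u_def by (rule ex_strat_reach_prob_less_val1_str[OF e])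
    then obtain P where P: "\<And>t. P t \<in> strat Gam2" "\<And>t. reach_prob \<delta> T (mless \<xi>) (P t) t < u t + e"
      by metis
    define \<pi>2 where "\<pi>2 = (\<lambda>h. if h = [s] then return_pmf b
        else if 2 \<le> length h then P (h ! 1) (tl h) else pmf_of_set (Gam2 (last h)))"
    have \<pi>2: "\<pi>2 \<in> strat Gam2"
      unfolding \<pi>2_def by (rule strat_first_move_then) (rule b, rule P(1))
    have after_b: "reach_upto \<delta> T (mless \<xi>) \<pi>2 m [s, t] \<le> u t + e" for m t
    proof -
      have "reach_upto \<delta> T (mless \<xi>) \<pi>2 m (s # [t]) =
          reach_upto \<delta> T (\<lambda>h. mless \<xi> (s # h)) (\<lambda>h. \<pi>2 (s # h)) m [t]"
        by (rule reach_upto_Cons) simp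
      also have "\<dots> = reach_upto \<delta> T (mless \<xi>) (P t) m [t]"
        by (rule reach_upto_cong_suffix) (simp_all add: mless_def \<pi>2_def)
      also have "\<dots> \<le> reach_prob \<delta> T (mless \<xi>) (P t) t" by (rule reach_upto_le_reach_prob)
      finally show ?thesis using P(2)[of t] by simp
    qed
    have "reach_upto \<delta> T (mless \<xi>) \<pi>2 n [s] \<le> Pre_move \<delta> \<xi> b (\<lambda>t. u t + e) s" for n
      using notT after_b val1_str_bounds e
      by (intro reach_upto_mless_le_Pre_move) (auto simp: \<pi>2_def u_def add_nonneg_nonneg)
    then have "reach_prob \<delta> T (mless \<xi>) \<pi>2 s \<le> Pre_move \<delta> \<xi> b u s + e"
      unfolding reach_prob_def Pre_move_add_const by (intro cSUP_least) simp_all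
    moreover have "u s \<le> reach_prob \<delta> T (mless \<xi>) \<pi>2 s"
      unfolding u_def by (rule val1_str_le_reach_prob[OF \<pi>2])
    ultimately show ?thesis by linarith
  qed
  then show ?thesis unfolding u_def by (rule field_le_epsilon)
qed

lemma val1_str_mless_trap_eq_0:
  assumes "\<And>s. B s \<in> Gam2 s" and "\<And>s. s \<in> Z \<Longrightarrow> s \<notin> T"
    and "\<And>s a t. s \<in> Z \<Longrightarrow> a \<in> set_pmf (\<xi> s) \<Longrightarrow> t \<in> set_pmf (\<delta> s a (B s)) \<Longrightarrow> t \<in> Z"
    and "s \<in> Z"
  shows "val1_str Gam2 \<delta> T (mless \<xi>) s = 0"
proof -
  have "mless (\<lambda>s. return_pmf (B s)) \<in> strat Gam2"
    unfolding strat_def mless_def using assms(1) by simp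
  then have "val1_str Gam2 \<delta> T (mless \<xi>) s \<le> reach_prob \<delta> T (mless \<xi>) (mless (\<lambda>s. return_pmf (B s))) s"
    by (rule val1_str_le_reach_prob)
  also have "\<dots> = 0"
  proof -
    have "reach_upto \<delta> T (mless \<xi>) (mless (\<lambda>s. return_pmf (B s))) n [s] = 0" for n
      by (rule reach_upto_mless_trap_eq_0[of Z T \<xi> \<delta> B]) (use assms(2-4) in auto)
    then show ?thesis unfolding reach_prob_def by simp
  qed
  finally show ?thesis using val1_str_bounds by (meson antisym)
qed

lemma reach_val_iter_bounds: "0 \<le> reach_val_iter \<delta> T Gam2 \<xi> n s \<and> reach_val_iter \<delta> T Gam2 \<xi> n s \<le> 1"
proof (induction n arbitrary: s)
  case (Suc n)
  obtain b where b: "b \<in> Gam2 s" using Gam2_nonempty[of s] by auto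
  let ?m = "Min ((\<lambda>b. Pre_move \<delta> \<xi> b (reach_val_iter \<delta> T Gam2 \<xi> n) s) ` Gam2 s)"
  have "0 \<le> ?m"
    by (rule le_Min_image[OF Gam2_nonempty], rule Pre_move_ge_bound) (use Suc.IH in blast)
  moreover have "?m \<le> 1"
    using Min_image_le[OF b] Pre_move_le_bound Suc.IH order_trans by metis
  ultimately show ?case by simp
qed simp

lemma reach_val_iter_Suc_ge: "reach_val_iter \<delta> T Gam2 \<xi> n s \<le> reach_val_iter \<delta> T Gam2 \<xi> (Suc n) s"
proof (induction n arbitrary: s)
  case 0
  have "0 \<le> reach_val_iter \<delta> T Gam2 \<xi> 1 s" using reach_val_iter_bounds by blast
  then show ?case by (cases "s \<in> T") simp_all
next
  case (Suc n)
  have "Min ((\<lambda>b. Pre_move \<delta> \<xi> b (reach_val_iter \<delta> T Gam2 \<xi> n) s) ` Gam2 s)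
     \<le> Min ((\<lambda>b. Pre_move \<delta> \<xi> b (reach_val_iter \<delta> T Gam2 \<xi> (Suc n)) s) ` Gam2 s)"
  proof (rule le_Min_image[OF Gam2_nonempty])
    fix b assume "b \<in> Gam2 s"
    then have "Min ((\<lambda>b. Pre_move \<delta> \<xi> b (reach_val_iter \<delta> T Gam2 \<xi> n) s) ` Gam2 s)
        \<le> Pre_move \<delta> \<xi> b (reach_val_iter \<delta> T Gam2 \<xi> n) s"
      by (rule Min_image_le)
    also have "\<dots> \<le> Pre_move \<delta> \<xi> b (reach_val_iter \<delta> T Gam2 \<xi> (Suc n)) s"
      by (rule Pre_move_mono) (rule Suc.IH)
    finally show "Min ((\<lambda>b. Pre_move \<delta> \<xi> b (reach_val_iter \<delta> T Gam2 \<xi> n) s) ` Gam2 s)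
        \<le> Pre_move \<delta> \<xi> b (reach_val_iter \<delta> T Gam2 \<xi> (Suc n)) s" .
  qed
  then show ?case by simp
qed

lemma reach_val_iter_le_reach_upto:
  assumes "\<pi>2 \<in> strat Gam2"
  shows "reach_val_iter \<delta> T Gam2 \<xi> n (last h) \<le> reach_upto \<delta> T (mless \<xi>) \<pi>2 n h"
proof (induction n arbitrary: h)
  case (Suc n)
  let ?s = "last h" and ?w = "reach_val_iter \<delta> T Gam2 \<xi> n"
  let ?m = "Min ((\<lambda>b. Pre_move \<delta> \<xi> b ?w ?s) ` Gam2 ?s)"
  let ?p = "\<lambda>a b t. pmf (mless \<xi> h) a * pmf (\<pi>2 h) b * pmf (\<delta> ?s a b) t"
  have "?m = (\<Sum>b\<in>UNIV. pmf (\<pi>2 h) b * ?m)"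
    by (simp add: sum_distrib_right[symmetric] sum_pmf_UNIV)
  also have "\<dots> \<le> (\<Sum>b\<in>UNIV. pmf (\<pi>2 h) b * Pre_move \<delta> \<xi> b ?w ?s)"
  proof (rule sum_mono)
    fix b
    show "pmf (\<pi>2 h) b * ?m \<le> pmf (\<pi>2 h) b * Pre_move \<delta> \<xi> b ?w ?s"
    proof (cases "b \<in> set_pmf (\<pi>2 h)")
      case True
      then have "b \<in> Gam2 ?s" using assms unfolding strat_def by auto
      then show ?thesis by (intro mult_left_mono Min_image_le pmf_nonneg)
    qed (simp add: set_pmf_iff)
  qed
  also have "\<dots> = Pre_pair \<delta> \<xi> (\<lambda>_. \<pi>2 h) ?w ?s"
    by (simp add: Pre_pair_eq_sum_Pre_move)
  also have "\<dots> = (\<Sum>a\<in>UNIV. \<Sum>b\<in>UNIV. \<Sum>t\<in>UNIV. ?p a b t * ?w t)"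
    unfolding Pre_pair_def mless_def
    by (intro sum.cong refl) (simp only: mult.commute mult.left_commute)
  also have "\<dots> \<le> (\<Sum>a\<in>UNIV. \<Sum>b\<in>UNIV. \<Sum>t\<in>UNIV. ?p a b t * reach_upto \<delta> T (mless \<xi>) \<pi>2 n (h @ [t]))"
  proof (intro sum_mono)
    fix a b t
    have "?w t \<le> reach_upto \<delta> T (mless \<xi>) \<pi>2 n (h @ [t])" using Suc.IH[of "h @ [t]"] by simp
    then show "?p a b t * ?w t \<le> ?p a b t * reach_upto \<delta> T (mless \<xi>) \<pi>2 n (h @ [t])"
      by (rule mult_left_mono) (intro mult_nonneg_nonneg pmf_nonneg)
  qed
  finally show ?case by simp
qed simp

lemma reach_val_iter_le_lim: "reach_val_iter \<delta> T Gam2 \<xi> n s \<le> reach_val_lim \<delta> T Gam2 \<xi> s"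
  unfolding reach_val_lim_def
  by (rule cSUP_upper) (simp, rule bdd_aboveI2[where M=1], simp add: reach_val_iter_bounds)

lemma reach_val_lim_bounds: "0 \<le> reach_val_lim \<delta> T Gam2 \<xi> s \<and> reach_val_lim \<delta> T Gam2 \<xi> s \<le> 1"
proof
  show "0 \<le> reach_val_lim \<delta> T Gam2 \<xi> s"
    using reach_val_iter_bounds reach_val_iter_le_lim order_trans by blast
  show "reach_val_lim \<delta> T Gam2 \<xi> s \<le> 1"
    unfolding reach_val_lim_def by (rule cSUP_least) (simp_all add: reach_val_iter_bounds)
qed

lemma reach_val_lim_target: "s \<in> T \<Longrightarrow> reach_val_lim \<delta> T Gam2 \<xi> s = 1"
  using reach_val_iter_le_lim[of \<delta> T \<xi> 0 s] reach_val_lim_bounds[of \<delta> T \<xi> s] by simp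

lemma reach_val_iter_tendsto: "(\<lambda>n. reach_val_iter \<delta> T Gam2 \<xi> n s) \<longlonglongrightarrow> reach_val_lim \<delta> T Gam2 \<xi> s"
  unfolding reach_val_lim_def
proof (rule LIMSEQ_incseq_SUP)
  show "bdd_above (range (\<lambda>n. reach_val_iter \<delta> T Gam2 \<xi> n s))"
    by (rule bdd_aboveI2[where M=1]) (simp add: reach_val_iter_bounds)
  show "incseq (\<lambda>n. reach_val_iter \<delta> T Gam2 \<xi> n s)"
    by (rule incseq_SucI) (rule reach_val_iter_Suc_ge)
qed

lemma reach_val_lim_fixpoint:
  assumes "s \<notin> T"
  shows "reach_val_lim \<delta> T Gam2 \<xi> s = Min ((\<lambda>b. Pre_move \<delta> \<xi> b (reach_val_lim \<delta> T Gam2 \<xi>) s) ` Gam2 s)"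
proof (rule LIMSEQ_unique)
  show "(\<lambda>n. reach_val_iter \<delta> T Gam2 \<xi> (Suc n) s) \<longlonglongrightarrow> reach_val_lim \<delta> T Gam2 \<xi> s"
    by (rule LIMSEQ_Suc[OF reach_val_iter_tendsto])
  have "(\<lambda>n. Pre_move \<delta> \<xi> b (reach_val_iter \<delta> T Gam2 \<xi> n) s)
      \<longlonglongrightarrow> Pre_move \<delta> \<xi> b (reach_val_lim \<delta> T Gam2 \<xi>) s" for b
    unfolding Pre_move_def by (intro tendsto_intros reach_val_iter_tendsto)
  from tendsto_Min_image[OF _ Gam2_nonempty this]
  show "(\<lambda>n. reach_val_iter \<delta> T Gam2 \<xi> (Suc n) s)
      \<longlonglongrightarrow> Min ((\<lambda>b. Pre_move \<delta> \<xi> b (reach_val_lim \<delta> T Gam2 \<xi>) s) ` Gam2 s)"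
    using assms by simp
qed

lemma reach_val_lim_attained:
  "\<exists>b\<in>Gam2 s. s \<notin> T \<longrightarrow> Pre_move \<delta> \<xi> b (reach_val_lim \<delta> T Gam2 \<xi>) s = reach_val_lim \<delta> T Gam2 \<xi> s"
proof (cases "s \<in> T")
  case False
  have "Min ((\<lambda>b. Pre_move \<delta> \<xi> b (reach_val_lim \<delta> T Gam2 \<xi>) s) ` Gam2 s)
      \<in> (\<lambda>b. Pre_move \<delta> \<xi> b (reach_val_lim \<delta> T Gam2 \<xi>) s) ` Gam2 s"
    by (rule Min_in) (simp_all add: Gam2_nonempty)
  then show ?thesis using reach_val_lim_fixpoint[OF False] by auto
qed (use Gam2_nonempty[of s] in auto)

lemma reach_val_lim_le_val1_str: "reach_val_lim \<delta> T Gam2 \<xi> s \<le> val1_str Gam2 \<delta> T (mless \<xi>) s"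
  unfolding reach_val_lim_def
proof (rule cSUP_least)
  fix n
  show "reach_val_iter \<delta> T Gam2 \<xi> n s \<le> val1_str Gam2 \<delta> T (mless \<xi>) s"
    unfolding val1_str_def
  proof (rule cINF_greatest[OF strat_nonempty])
    fix \<pi>2 assume "\<pi>2 \<in> strat Gam2"
    then have "reach_val_iter \<delta> T Gam2 \<xi> n (last [s]) \<le> reach_upto \<delta> T (mless \<xi>) \<pi>2 n [s]"
      by (rule reach_val_iter_le_reach_upto)
    also have "\<dots> \<le> reach_prob \<delta> T (mless \<xi>) \<pi>2 s" by (rule reach_upto_le_reach_prob)
    finally show "reach_val_iter \<delta> T Gam2 \<xi> n s \<le> reach_prob \<delta> T (mless \<xi>) \<pi>2 s" by simp
  qed
qed simp

lemma le_reach_val_lim_of_le_Pre_move: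
  assumes "s \<notin> T" and "\<And>b. b \<in> Gam2 s \<Longrightarrow> x \<le> Pre_move \<delta> \<xi> b v s"
    and "\<And>t. v t \<le> reach_val_lim \<delta> T Gam2 \<xi> t"
  shows "x \<le> reach_val_lim \<delta> T Gam2 \<xi> s"
  unfolding reach_val_lim_fixpoint[OF assms(1)]
proof (rule le_Min_image[OF Gam2_nonempty])
  fix b assume "b \<in> Gam2 s"
  then have "x \<le> Pre_move \<delta> \<xi> b v s" by (rule assms(2))
  also have "\<dots> \<le> Pre_move \<delta> \<xi> b (reach_val_lim \<delta> T Gam2 \<xi>) s" by (rule Pre_move_mono) (rule assms(3))
  finally show "x \<le> Pre_move \<delta> \<xi> b (reach_val_lim \<delta> T Gam2 \<xi>) s" .
qed

subsection \<open>Switching only at strictly improving states\<close>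

lemma successor_of_gap_maximiser:
  fixes w :: "'s \<Rightarrow> real" and \<delta> :: "'s \<Rightarrow> 'm \<Rightarrow> 'm \<Rightarrow> 's pmf" and T :: "'s set"
    and \<gamma> :: "'s \<Rightarrow> 'm pmf"
  defines "u \<equiv> val1_str Gam2 \<delta> T (mless \<gamma>)"
  assumes improving: "\<gamma>' s \<noteq> \<gamma> s \<Longrightarrow> u s < Pre_move \<delta> \<gamma>' b u s"
    and notT: "s \<notin> T" and b: "b \<in> Gam2 s" and w_fix: "Pre_move \<delta> \<gamma>' b w s = w s"
    and max: "\<And>t. u t - w t \<le> u s - w s"
    and a: "a \<in> set_pmf (\<gamma> s)" and t: "t \<in> set_pmf (\<delta> s a b)"
  shows "u t - w t = u s - w s"
proof -
  define d where "d = (\<lambda>t. u t - w t)"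
  have Pre_d: "Pre_move \<delta> \<xi> b d s = Pre_move \<delta> \<xi> b u s - Pre_move \<delta> \<xi> b w s" for \<xi>
    unfolding d_def by (rule Pre_move_diff)
  have "Pre_move \<delta> \<gamma>' b d s \<le> d s" by (rule Pre_move_le_bound) (use max in \<open>simp add: d_def\<close>)
  then have same: "\<gamma>' s = \<gamma> s"
    using improving Pre_d[of \<gamma>'] w_fix unfolding d_def by fastforce
  have "u s \<le> Pre_move \<delta> \<gamma> b u s"
    unfolding u_def by (rule val1_str_mless_le_Pre_move[OF notT b])
  then have "d s \<le> Pre_move \<delta> \<gamma> b d s"
    using Pre_d[of \<gamma>] w_fix Pre_move_cong_sel[of \<gamma>' s \<gamma> \<delta> b w] same unfolding d_def by simp
  then have "Pre_move \<delta> \<gamma> b (\<lambda>t. d s - d t) s \<le> 0"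
    by (simp add: Pre_move_diff Pre_move_const)
  then have "d s - d t = 0"
    using Pre_move_nonpos_imp_zero_on_support[of "\<lambda>t. d s - d t" \<delta> \<gamma> b s a t] max a t
    unfolding d_def by simp
  then show ?thesis unfolding d_def by simp
qed

lemma val1_str_mless_le_reach_val_lim:
  assumes improving: "\<And>s b. s \<notin> T \<Longrightarrow> b \<in> Gam2 s \<Longrightarrow> \<gamma>' s \<noteq> \<gamma> s \<Longrightarrow>
        val1_str Gam2 \<delta> T (mless \<gamma>) s < Pre_move \<delta> \<gamma>' b (val1_str Gam2 \<delta> T (mless \<gamma>)) s"
  shows "val1_str Gam2 \<delta> T (mless \<gamma>) s \<le> reach_val_lim \<delta> T Gam2 \<gamma>' s"
proof (rule ccontr)
  assume contra: "\<not> ?thesis"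
  define u where "u = val1_str Gam2 \<delta> T (mless \<gamma>)"
  define w where "w = reach_val_lim \<delta> T Gam2 \<gamma>'"
  define M where "M = Max (range (\<lambda>t. u t - w t))"
  define Z where "Z = {s. u s - w s = M}"
  have le_M: "u t - w t \<le> M" for t unfolding M_def by (rule Max_ge) auto
  have M_pos: "M > 0" using le_M[of s] contra unfolding u_def w_def by simp
  have Z_notT: "s \<notin> T" if "s \<in> Z" for s
    using that M_pos val1_str_bounds[of \<delta> T "mless \<gamma>" s] reach_val_lim_target
    unfolding Z_def u_def w_def by force
  have "\<forall>s. \<exists>b. b \<in> Gam2 s \<and> (s \<notin> T \<longrightarrow> Pre_move \<delta> \<gamma>' b w s = w s)"
    using reach_val_lim_attained unfolding w_def by blast
  then obtain B where B: "\<And>s. B s \<in> Gam2 s" and B_fix: "\<And>s. s \<notin> T \<Longrightarrow> Pre_move \<delta> \<gamma>' (B s) w s = w s"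
    by metis
  have Z_closed: "t \<in> Z" if "s \<in> Z" "a \<in> set_pmf (\<gamma> s)" "t \<in> set_pmf (\<delta> s a (B s))" for s a t
  proof -
    have "u t - w t = u s - w s"
      unfolding u_def using improving[OF Z_notT[OF that(1)] B] Z_notT B B_fix le_M that
      by (intro successor_of_gap_maximiser[where b="B s" and \<gamma>'=\<gamma>']) (auto simp: Z_def u_def)
    then show ?thesis using that(1) unfolding Z_def by simp
  qed
  have "M \<in> range (\<lambda>t. u t - w t)" unfolding M_def by (rule Max_in) auto
  then obtain s0 where s0: "s0 \<in> Z" unfolding Z_def by auto
  have "u s0 = 0"
    unfolding u_def by (rule val1_str_mless_trap_eq_0[where B=B and Z=Z]) (use B Z_notT Z_closed s0 in auto)
  then show False
    using s0 M_pos reach_val_lim_bounds[of \<delta> T \<gamma>' s0] unfolding Z_def w_def by simp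
qed

lemma improve_step_unswitched:
  "improve_step Gam1 Gam2 \<delta> T \<gamma> \<gamma>' \<Longrightarrow> s \<notin> Iprime Gam1 Gam2 \<delta> T \<gamma> \<Longrightarrow> \<gamma>' s = \<gamma> s"
  unfolding improve_step_def Let_def by auto

lemma improve_step_Pre1_le_Pre_move:
  assumes "improve_step Gam1 Gam2 \<delta> T \<gamma> \<gamma>'" and "s \<in> Iprime Gam1 Gam2 \<delta> T \<gamma>" and "b \<in> Gam2 s"
  shows "Pre1 Gam1 Gam2 \<delta> (vsel Gam2 \<delta> T \<gamma>) s \<le> Pre_move \<delta> \<gamma>' b (vsel Gam2 \<delta> T \<gamma>) s"
proof -
  let ?u = "vsel Gam2 \<delta> T \<gamma>"
  obtain \<xi>1 where "\<forall>s\<in>Iprime Gam1 Gam2 \<delta> T \<gamma>. Pre1_sel Gam2 \<delta> \<xi>1 ?u s = Pre1 Gam1 Gam2 \<delta> ?u s"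
    and "\<gamma>' = (\<lambda>s. if s \<in> Iprime Gam1 Gam2 \<delta> T \<gamma> then \<xi>1 s else \<gamma> s)"
    using assms(1) unfolding improve_step_def Let_def by blast
  with assms(2) have \<xi>1: "Pre1_sel Gam2 \<delta> \<xi>1 ?u s = Pre1 Gam1 Gam2 \<delta> ?u s" and "\<gamma>' s = \<xi>1 s"
    by auto
  have "Pre1_sel Gam2 \<delta> \<xi>1 ?u s \<le> Pre_move \<delta> \<xi>1 b ?u s"
    by (rule Pre1_sel_le_Pre_move[OF assms(3)]) (simp add: vsel_def val1_str_bounds)
  also have "\<dots> = Pre_move \<delta> \<gamma>' b ?u s"
    by (rule Pre_move_cong_sel) (simp add: \<open>\<gamma>' s = \<xi>1 s\<close>)
  finally show ?thesis using \<xi>1 by simp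
qed

lemma improve_step_vsel_le_reach_val_lim:
  assumes step: "improve_step Gam1 Gam2 \<delta> T \<gamma> \<gamma>'"
  shows "vsel Gam2 \<delta> T \<gamma> s \<le> reach_val_lim \<delta> T Gam2 \<gamma>' s"
  unfolding vsel_def
proof (rule val1_str_mless_le_reach_val_lim)
  fix s b assume "s \<notin> T" and b: "b \<in> Gam2 s" and "\<gamma>' s \<noteq> \<gamma> s"
  then have switched: "s \<in> Iprime Gam1 Gam2 \<delta> T \<gamma>" using improve_step_unswitched[OF step] by blast
  then have "vsel Gam2 \<delta> T \<gamma> s < Pre1 Gam1 Gam2 \<delta> (vsel Gam2 \<delta> T \<gamma>) s" unfolding Iprime_def by simp
  also have "\<dots> \<le> Pre_move \<delta> \<gamma>' b (vsel Gam2 \<delta> T \<gamma>) s"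
    by (rule improve_step_Pre1_le_Pre_move[OF step switched b])
  finally show "val1_str Gam2 \<delta> T (mless \<gamma>) s < Pre_move \<delta> \<gamma>' b (val1_str Gam2 \<delta> T (mless \<gamma>)) s"
    unfolding vsel_def .
qed

lemma improve_step_Pre1_le_reach_val_lim:
  assumes ne1: "\<And>s. Gam1 s \<noteq> {}"
    and absorbing: "\<And>s a b. s \<in> T \<union> W2 Gam1 Gam2 \<delta> T \<Longrightarrow> a \<in> Gam1 s \<Longrightarrow> b \<in> Gam2 s
                       \<Longrightarrow> \<delta> s a b = return_pmf s"
    and step: "improve_step Gam1 Gam2 \<delta> T \<gamma> \<gamma>'"
  shows "Pre1 Gam1 Gam2 \<delta> (vsel Gam2 \<delta> T \<gamma>) s \<le> reach_val_lim \<delta> T Gam2 \<gamma>' s"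
proof (cases "s \<in> Iprime Gam1 Gam2 \<delta> T \<gamma>")
  case True
  then have "s \<notin> T" unfolding Iprime_def by simp
  then show ?thesis
  proof (rule le_reach_val_lim_of_le_Pre_move)
    show "\<And>b. b \<in> Gam2 s \<Longrightarrow> Pre1 Gam1 Gam2 \<delta> (vsel Gam2 \<delta> T \<gamma>) s \<le> Pre_move \<delta> \<gamma>' b (vsel Gam2 \<delta> T \<gamma>) s"
      by (rule improve_step_Pre1_le_Pre_move[OF step True])
    show "\<And>t. vsel Gam2 \<delta> T \<gamma> t \<le> reach_val_lim \<delta> T Gam2 \<gamma>' t"
      by (rule improve_step_vsel_le_reach_val_lim[OF step])
  qed
next
  case False
  have "Pre1 Gam1 Gam2 \<delta> (vsel Gam2 \<delta> T \<gamma>) s \<le> vsel Gam2 \<delta> T \<gamma> s"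
  proof (cases "s \<in> T \<union> W2 Gam1 Gam2 \<delta> T")
    case True
    show ?thesis unfolding vsel_def
      by (rule Pre1_le_at_absorbing[OF ne1]) (simp add: val1_str_bounds, rule absorbing[OF True])
  qed (use False in \<open>auto simp: Iprime_def\<close>)
  then show ?thesis using improve_step_vsel_le_reach_val_lim[OF step, of s] by linarith
qed

end

theorem lemma8:
  fixes Gam1 Gam2 :: "'s::finite \<Rightarrow> 'm::finite set"
    and \<delta> :: "'s \<Rightarrow> 'm \<Rightarrow> 'm \<Rightarrow> 's pmf"
    and T :: "'s set"
    and \<gamma> \<gamma>' :: "'s \<Rightarrow> 'm pmf"
  assumes ne1: "\<And>s. Gam1 s \<noteq> {}"
    and ne2: "\<And>s. Gam2 s \<noteq> {}"
    and absorbing: "\<And>s a b. s \<in> T \<union> W2 Gam1 Gam2 \<delta> T \<Longrightarrow> a \<in> Gam1 s \<Longrightarrow> b \<in> Gam2 s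
                       \<Longrightarrow> \<delta> s a b = return_pmf s"
    and iter_i: "alg_iter Gam1 Gam2 \<delta> T \<gamma>"
    and iter_next: "improve_step Gam1 Gam2 \<delta> T \<gamma> \<gamma>'"
  shows "(\<forall>s. vsel Gam2 \<delta> T \<gamma>' s \<ge> Pre1 Gam1 Gam2 \<delta> (vsel Gam2 \<delta> T \<gamma>) s)
       \<and> (\<forall>s. vsel Gam2 \<delta> T \<gamma>' s \<ge> vsel Gam2 \<delta> T \<gamma> s)
       \<and> (\<forall>s\<in>{s. Pre1 Gam1 Gam2 \<delta> (vsel Gam2 \<delta> T \<gamma>) s > vsel Gam2 \<delta> T \<gamma> s}.
            vsel Gam2 \<delta> T \<gamma>' s > vsel Gam2 \<delta> T \<gamma> s)"
proof -
  interpret player2_moves Gam2 by unfold_locales (rule ne2)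
  let ?u = "vsel Gam2 \<delta> T \<gamma>" and ?w = "reach_val_lim \<delta> T Gam2 \<gamma>'"
  have w_le: "?w s \<le> vsel Gam2 \<delta> T \<gamma>' s" for s
    unfolding vsel_def by (rule reach_val_lim_le_val1_str)
  have "Pre1 Gam1 Gam2 \<delta> ?u s \<le> ?w s" for s
    by (rule improve_step_Pre1_le_reach_val_lim[OF ne1 absorbing iter_next])
  moreover have "?u s \<le> ?w s" for s
    by (rule improve_step_vsel_le_reach_val_lim[OF iter_next])
  ultimately have "Pre1 Gam1 Gam2 \<delta> ?u s \<le> vsel Gam2 \<delta> T \<gamma>' s" "?u s \<le> vsel Gam2 \<delta> T \<gamma>' s" for s
    using w_le order_trans by blast+
  then show ?thesis by (auto intro: less_le_trans)
qed

end
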